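(* Let $d\ge3$, $\mathcal D=\mathbb S_1^{d-1}$, $M\in\mathrm{SL}(d+1,\mathbb R)$, $K=\mathcal G_{\mathcal D}(M)$, and let $(u_1,\vec v_1),\dots,(u_K,\vec v_K)\in\mathcal Q_{\mathcal D}(M)$ satisfy (V1)–(V3). If $(u,\vec v)\in\mathcal Q_{\mathcal D}(M)$ with $u\in(-1/2,1/2)$, then $|\vec v_K|\le|\vec v|$. Consequently, if $u_i\in(-1/2,1/2)$ for some $1\le i\le K$, then $i=K$.
   Context: $\mathbb S_1^{d-1}$ is the unit sphere. Row vectors in $\mathbb R^{d+1}$ are written $(u,\vec v)$, $u\in\mathbb R$, $\vec v\in\mathbb R^d$; $\mathbb Z^{d+1}M=\{\vec mM:\vec m\in\mathbb Z^{d+1}\}$. For $\mathcal D\subseteq\mathbb S_1^{d-1}$: $\mathcal Q_{\mathcal D}(M,t)=\{(u,\vec v)\in\mathbb Z^{d+1}M:-t<u<1-t,\ \vec v\in\mathbb R_{>0}\mathcal D\}$ for $t\in(0,1)$; $\mathcal Q_{\mathcal D}(M)=\{(u,\vec v)\in\mathbb Z^{d+1}M:|u|<1,\ \vec v\in\mathbb R_{>0}\mathcal D\}$; $F_{\mathcal D}(M,t)=\min\{|\vec v|:(u,\vec v)\in\mathcal Q_{\mathcal D}(M,t)\}$; $\mathcal F_{\mathcal D}(M)=\{F_{\mathcal D}(M,t):0<t<1\}$, $\mathcal G_{\mathcal D}(M)=|\mathcal F_{\mathcal D}(M)|$. Conditions: (V1) $0<|\vec v_1|<\cdots<|\vec v_K|$;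 (V2) each $\delta\in\mathcal F_{\mathcal D}(M)$ equals $|\vec v_i|$ for some $i$; (V3) for each $i$ there is $t\in(0,1)$ with $(u_i,\vec v_i)\in\mathcal Q_{\mathcal D}(M,t)$ and $|\vec v_i|=F_{\mathcal D}(M,t)$. *)

theory Defs
  imports Complex_Main "Jordan_Normal_Form.Determinant"
begin

definition vnorm :: "real vec \<Rightarrow> real" where
  "vnorm v = sqrt (\<Sum>i<dim_vec v. (v $ i)^2)"

definition unit_sphere :: "nat \<Rightarrow> real vec set" where
  "unit_sphere d = {x \<in> carrier_vec d. vnorm x = 1}"

definition pos_cone :: "real vec set \<Rightarrow> real vec set" where
  "pos_cone D = {c \<cdot>\<^sub>v x | c x. c > 0 \<and> x \<in> D}"

text \<open>Lattice Z^{d+1} M of row vectors m M with m integral (m M = M^T m).\<close>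
definition lattice :: "nat \<Rightarrow> real mat \<Rightarrow> real vec set" where
  "lattice d M = {transpose_mat M *\<^sub>v m | m. m \<in> carrier_vec (d+1) \<and> (\<forall>i<d+1. m $ i \<in> \<int>)}"

definition split_pt :: "nat \<Rightarrow> real vec \<Rightarrow> real \<times> real vec" where
  "split_pt d w = (w $ 0, vec d (\<lambda>i. w $ (Suc i)))"

definition Q_t :: "nat \<Rightarrow> real vec set \<Rightarrow> real mat \<Rightarrow> real \<Rightarrow> (real \<times> real vec) set" where
  "Q_t d D M t = {(u, v). (u, v) \<in> split_pt d ` lattice d M \<and> - t < u \<and> u < 1 - t \<and> v \<in> pos_cone D}"

definition Q :: "nat \<Rightarrow> real vec set \<Rightarrow> real mat \<Rightarrow> (real \<times> real vec) set" where
  "Q d D M = {(u, v). (u, v) \<in> split_pt d ` lattice d M \<and> \<bar>u\<bar> < 1 \<and> v \<in> pos_cone D}"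

definition F_t :: "nat \<Rightarrow> real vec set \<Rightarrow> real mat \<Rightarrow> real \<Rightarrow> real" where
  "F_t d D M t = Inf {vnorm v | u v. (u, v) \<in> Q_t d D M t}"

definition F_set :: "nat \<Rightarrow> real vec set \<Rightarrow> real mat \<Rightarrow> real set" where
  "F_set d D M = {F_t d D M t | t. 0 < t \<and> t < 1}"

definition G :: "nat \<Rightarrow> real vec set \<Rightarrow> real mat \<Rightarrow> nat" where
  "G d D M = card (F_set d D M)"

end

theory Submission
  imports Defs
begin

text \<open>Negation preserves the lattice and the unit sphere, so \<open>Q\<^sub>D(M)\<close> is symmetric under
  \<open>(u, v) \<mapsto> (-u, -v)\<close> whenever \<open>D = -D\<close>. For \<open>|u| < 1/2\<close> and every \<open>t \<in> (0, 1)\<close>, one of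
  \<open>u\<close>, \<open>-u\<close> lies in the window \<open>(-t, 1 - t)\<close>; hence such a point competes in every minimisation
  defining \<open>F\<^sub>D(M, t)\<close>, and its \<open>|v|\<close> bounds each value of \<open>F\<^sub>D(M, t)\<close>, in particular
  \<open>|v\<^sub>K|\<close>, from above. The strict monotonicity (V1) then forces \<open>i = K\<close>.\<close>

lemma vnorm_uminus [simp]: "vnorm (- v) = vnorm v"
  unfolding vnorm_def by simp

lemma vnorm_nonneg: "0 \<le> vnorm v"
  unfolding vnorm_def by (auto intro: sum_nonneg)

lemma uminus_mem_unit_sphere: "x \<in> unit_sphere d \<Longrightarrow> - x \<in> unit_sphere d"
  unfolding unit_sphere_def by simp

lemma uminus_mem_pos_cone:
  assumes D_sym: "\<And>x. x \<in> D \<Longrightarrow> - x \<in> D" and v: "v \<in> pos_cone D"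
  shows "- v \<in> pos_cone D"
proof -
  from v obtain c x where "v = c \<cdot>\<^sub>v x" "c > 0" "x \<in> D"
    unfolding pos_cone_def by auto
  moreover from this have "- v = c \<cdot>\<^sub>v (- x)"
    by (intro eq_vecI) auto
  ultimately show ?thesis
    unfolding pos_cone_def using D_sym by blast
qed

lemma uminus_mem_lattice:
  assumes "dim_row M = d + 1" and "w \<in> lattice d M"
  shows "- w \<in> lattice d M"
proof -
  from assms(2) obtain m where m: "w = transpose_mat M *\<^sub>v m" "m \<in> carrier_vec (d+1)"
    "\<forall>i<d+1. m $ i \<in> \<int>"
    unfolding lattice_def by auto
  have "- w = transpose_mat M *\<^sub>v (- m)"
    using m assms(1) by (intro eq_vecI) auto
  with m show ?thesis
    unfolding lattice_def by (auto intro!: exI[of _ "- m"])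
qed

lemma dim_vec_lattice: "w \<in> lattice d M \<Longrightarrow> dim_vec w = dim_col M"
  unfolding lattice_def by auto

lemma split_pt_uminus:
  assumes "d < dim_vec w"
  shows "split_pt d (- w) = (- fst (split_pt d w), - snd (split_pt d w))"
  using assms unfolding split_pt_def by (auto intro!: eq_vecI)

lemma Q_uminus:
  assumes D_sym: "\<And>x. x \<in> D \<Longrightarrow> - x \<in> D"
    and M: "M \<in> carrier_mat (d+1) (d+1)"
    and uv: "(u, v) \<in> Q d D M"
  shows "(- u, - v) \<in> Q d D M"
proof -
  from uv obtain w where w: "w \<in> lattice d M" "split_pt d w = (u, v)"
    and "\<bar>u\<bar> < 1" "v \<in> pos_cone D"
    unfolding Q_def by auto
  moreover have "- w \<in> lattice d M"
    using M w(1) by (intro uminus_mem_lattice) auto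
  moreover have "split_pt d (- w) = (- u, - v)"
    using split_pt_uminus[of d w] w M by (simp add: dim_vec_lattice)
  ultimately show ?thesis
    unfolding Q_def using uminus_mem_pos_cone[OF D_sym] by (auto intro: image_eqI[of _ _ "- w"])
qed

lemma Q_t_if_Q: "(u, v) \<in> Q d D M \<Longrightarrow> - t < u \<Longrightarrow> u < 1 - t \<Longrightarrow> (u, v) \<in> Q_t d D M t"
  unfolding Q_def Q_t_def by auto

lemma F_t_le_vnorm:
  assumes "(u, v) \<in> Q_t d D M t"
  shows "F_t d D M t \<le> vnorm v"
  unfolding F_t_def
proof (rule cInf_lower)
  show "vnorm v \<in> {vnorm v |u v. (u, v) \<in> Q_t d D M t}"
    using assms by blast
  show "bdd_below {vnorm v |u v. (u, v) \<in> Q_t d D M t}"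
    by (rule bdd_belowI[of _ 0]) (auto simp: vnorm_nonneg)
qed

lemma in_window_or_uminus_in_window:
  fixes u t :: real
  assumes "\<bar>u\<bar> < 1/2" "0 < t" "t < 1"
  shows "(- t < u \<and> u < 1 - t) \<or> (- t < - u \<and> - u < 1 - t)"
  using assms by linarith

lemma F_t_le_vnorm_if_Q_centred:
  assumes D_sym: "\<And>x. x \<in> D \<Longrightarrow> - x \<in> D"
    and M: "M \<in> carrier_mat (d+1) (d+1)"
    and uv: "(u, v) \<in> Q d D M" and u: "\<bar>u\<bar> < 1/2"
    and t: "0 < t" "t < 1"
  shows "F_t d D M t \<le> vnorm v"
  using in_window_or_uminus_in_window[OF u t]
proof
  assume "- t < u \<and> u < 1 - t"
  with uv show ?thesis
    by (blast intro: F_t_le_vnorm Q_t_if_Q)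
next
  assume "- t < - u \<and> - u < 1 - t"
  with Q_uminus[OF D_sym M uv] have "F_t d D M t \<le> vnorm (- v)"
    by (blast intro: F_t_le_vnorm Q_t_if_Q)
  then show ?thesis
    by simp
qed

theorem proposition6p2:
  fixes d K :: nat and M :: "real mat" and us :: "nat \<Rightarrow> real" and vs :: "nat \<Rightarrow> real vec"
  assumes d3: "d \<ge> 3"
    and M_SL: "M \<in> carrier_mat (d+1) (d+1)" "det M = 1"
    and K_def: "K = G d (unit_sphere d) M"
    and inQ: "\<forall>i\<in>{1..K}. (us i, vs i) \<in> Q d (unit_sphere d) M"
    and V1: "0 < vnorm (vs 1)" "\<forall>i\<in>{1..K}. \<forall>j\<in>{1..K}. i < j \<longrightarrow> vnorm (vs i) < vnorm (vs j)"
    and V2: "\<forall>\<delta>\<in>F_set d (unit_sphere d) M. \<exists>i\<in>{1..K}. \<delta> = vnorm (vs i)"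
    and V3: "\<forall>i\<in>{1..K}. \<exists>t. 0 < t \<and> t < 1 \<and> (us i, vs i) \<in> Q_t d (unit_sphere d) M t
               \<and> vnorm (vs i) = F_t d (unit_sphere d) M t"
  shows "(\<forall>u v. (u, v) \<in> Q d (unit_sphere d) M \<and> -1/2 < u \<and> u < 1/2 \<longrightarrow> vnorm (vs K) \<le> vnorm v)
       \<and> (\<forall>i\<in>{1..K}. -1/2 < us i \<and> us i < 1/2 \<longrightarrow> i = K)"
proof -
  have "F_t d (unit_sphere d) M (1/2) \<in> F_set d (unit_sphere d) M"
    unfolding F_set_def by (auto intro!: exI[of _ "1/2"])
  with V2 have K: "K \<in> {1..K}"
    by auto
  with V3 obtain t where t: "0 < t" "t < 1" "vnorm (vs K) = F_t d (unit_sphere d) M t"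
    by blast
  have centred_bound: "vnorm (vs K) \<le> vnorm v"
    if "(u, v) \<in> Q d (unit_sphere d) M" "-1/2 < u" "u < 1/2" for u v
    using F_t_le_vnorm_if_Q_centred[OF uminus_mem_unit_sphere M_SL(1) that(1) _ t(1,2)] that t(3)
    by simp
  show ?thesis
  proof (intro conjI allI impI ballI)
    fix i assume i: "i \<in> {1..K}" and "-1/2 < us i \<and> us i < 1/2"
    with inQ centred_bound have "vnorm (vs K) \<le> vnorm (vs i)"
      by blast
    with V1(2) i K show "i = K"
      by fastforce
  qed (use centred_bound in blast)
qed

end
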